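(* Let $k$ be a field, $A=kQ_A/I_A$ a monomial algebra, and $B$ the algebra obtained by gluing two distinct non-isolated vertices $e_1,e_n$ of $Q_A$. Suppose either (i) $e_1$ is a source and $e_n$ is a sink, or (ii) $A$ is a radical square zero algebra. Then $\dim_k\mathrm{Im}(\delta^0_A)=\dim_k\mathrm{Im}(\delta^0_B)+1+c_B-c_A$. In particular, if $e_1,e_n$ lie in the same block of $A$, then $\dim_k\mathrm{Im}(\delta^0_A)=\dim_k\mathrm{Im}(\delta^0_B)+1$; if they lie in different blocks, then $\dim_k\mathrm{Im}(\delta^0_A)=\dim_k\mathrm{Im}(\delta^0_B)$.
   Context: Monomial algebra: $A=kQ_A/I_A$ with $Q_A$ a finite quiver and $I_A$ an admissible ideal generated by a minimal set $Z_A$ of paths of length $\ge2$; $\mathcal B_A$ is the set of paths (including trivial ones) avoiding elements of $Z_A$ as subpaths. Radical square zero: $I_A$ generated by all paths of length 2. Source: vertex without incoming arrows; sink: vertex without outgoing arrows. Gluing: $B\subseteq A$ generated by $e_1+e_n$, the remaining vertex idempotents and all arrows; $B\cong kQ_B/I_B$ with $Q_B$ obtained by identifying $e_1,e_n$ and $I_B$ generated by $I_A$ and all newly formed length-2 paths through the identified vertex; $\mathcal B_B$ is its set of basis paths. $c_A,c_B$: numbers of connected components of $Q_A,Q_B$; blocks correspond to components. For path sets $X,Y$, $k(X\|Y)$ has basis the pairs $x\|y$ of parallel paths. For monomial $\Lambda=kQ/\langle Z\rangle$ with basis paths $\mathcal B$, $\delta^0:k(Q_0\|\mathcal B)\to k(Q_1\|\mathcal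 B)$, $e\|\gamma\mapsto\sum_{a\in Q_1,s(a)=e,a\gamma\in\mathcal B}a\|a\gamma-\sum_{a\in Q_1,t(a)=e,\gamma a\in\mathcal B}a\|\gamma a$; $\delta^0_A,\delta^0_B$ are these for $A,B$. *)

theory Defs
  imports "HOL-Analysis.Analysis" "HOL-Library.Function_Algebras"
begin

text \<open>A path is a pair (v, as): its starting vertex v and the list of its arrows in the
  order in which they are traversed; (v, []) is the trivial path e_v.\<close>

type_synonym ('v, 'a) qpath = "'v \<times> 'a list"

definition quiver :: "'v set \<Rightarrow> 'a set \<Rightarrow> ('a \<Rightarrow> 'v) \<Rightarrow> ('a \<Rightarrow> 'v) \<Rightarrow> bool" where
  "quiver V E s t \<longleftrightarrow> finite V \<and> finite E \<and> (\<forall>a\<in>E. s a \<in> V \<and> t a \<in> V)"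

definition arrow_seq :: "'a set \<Rightarrow> ('a \<Rightarrow> 'v) \<Rightarrow> ('a \<Rightarrow> 'v) \<Rightarrow> 'a list \<Rightarrow> bool" where
  "arrow_seq E s t as \<longleftrightarrow> set as \<subseteq> E \<and> (\<forall>i. Suc i < length as \<longrightarrow> t (as ! i) = s (as ! Suc i))"

definition valid_path :: "'v set \<Rightarrow> 'a set \<Rightarrow> ('a \<Rightarrow> 'v) \<Rightarrow> ('a \<Rightarrow> 'v) \<Rightarrow> ('v, 'a) qpath \<Rightarrow> bool" where
  "valid_path V E s t p \<longleftrightarrow> fst p \<in> V \<and> arrow_seq E s t (snd p)
     \<and> (snd p \<noteq> [] \<longrightarrow> s (hd (snd p)) = fst p)"

definition pend :: "('a \<Rightarrow> 'v) \<Rightarrow> ('v, 'a) qpath \<Rightarrow> 'v" where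
  "pend t p = (if snd p = [] then fst p else t (last (snd p)))"

definition contains_sub :: "'a list \<Rightarrow> 'a list \<Rightarrow> bool" where
  "contains_sub as z \<longleftrightarrow> (\<exists>u w. as = u @ z @ w)"

text \<open>Monomial algebra kQ/<Z>: Z a minimal set of paths of length \<ge> 2 generating an admissible ideal.\<close>
definition monomial_data :: "'v set \<Rightarrow> 'a set \<Rightarrow> ('a \<Rightarrow> 'v) \<Rightarrow> ('a \<Rightarrow> 'v) \<Rightarrow> 'a list set \<Rightarrow> bool" where
  "monomial_data V E s t Z \<longleftrightarrow> quiver V E s t
     \<and> (\<forall>z\<in>Z. arrow_seq E s t z \<and> length z \<ge> 2)
     \<and> (\<forall>z\<in>Z. \<forall>z'\<in>Z. contains_sub z' z \<longrightarrow> z = z')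
     \<and> (\<exists>m. \<forall>p. valid_path V E s t p \<and> length (snd p) \<ge> m \<longrightarrow> (\<exists>z\<in>Z. contains_sub (snd p) z))"

definition basis_paths :: "'v set \<Rightarrow> 'a set \<Rightarrow> ('a \<Rightarrow> 'v) \<Rightarrow> ('a \<Rightarrow> 'v) \<Rightarrow> 'a list set \<Rightarrow> ('v, 'a) qpath set" where
  "basis_paths V E s t Z = {p. valid_path V E s t p \<and> (\<forall>z\<in>Z. \<not> contains_sub (snd p) z)}"

text \<open>Basis of k(Q_0 || B): pairs e || gamma with gamma a basis path from e to e.\<close>
definition dom_basis :: "'v set \<Rightarrow> 'a set \<Rightarrow> ('a \<Rightarrow> 'v) \<Rightarrow> ('a \<Rightarrow> 'v) \<Rightarrow> 'a list set \<Rightarrow> ('v \<times> ('v, 'a) qpath) set" where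
  "dom_basis V E s t Z = {(e, g). e \<in> V \<and> g \<in> basis_paths V E s t Z \<and> fst g = e \<and> pend t g = e}"

text \<open>Basis of k(Q_1 || B): pairs a || p with p a basis path parallel to the arrow a.\<close>
definition cod_basis :: "'v set \<Rightarrow> 'a set \<Rightarrow> ('a \<Rightarrow> 'v) \<Rightarrow> ('a \<Rightarrow> 'v) \<Rightarrow> 'a list set \<Rightarrow> ('a \<times> ('v, 'a) qpath) set" where
  "cod_basis V E s t Z = {(a, p). a \<in> E \<and> p \<in> basis_paths V E s t Z \<and> fst p = s a \<and> pend t p = t a}"

text \<open>Paths are multiplied as composition:
  a gamma (with s(a) = e) means "first gamma, then a", i.e. (fst gamma, snd gamma @ [a]);
  gamma a (with t(a) = e) means "first a, then gamma", i.e. (s a, a # snd gamma).\<close>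
definition delta0_coeff :: "'v set \<Rightarrow> 'a set \<Rightarrow> ('a \<Rightarrow> 'v) \<Rightarrow> ('a \<Rightarrow> 'v) \<Rightarrow> 'a list set
    \<Rightarrow> ('v \<times> ('v, 'a) qpath) \<Rightarrow> ('a \<times> ('v, 'a) qpath) \<Rightarrow> 'k::field" where
  "delta0_coeff V E s t Z d c =
    (let (e, g) = d; (a, p) = c; Bs = basis_paths V E s t Z in
      (if a \<in> E \<and> s a = e \<and> p = (fst g, snd g @ [a]) \<and> p \<in> Bs then 1 else 0)
    - (if a \<in> E \<and> t a = e \<and> p = (s a, a # snd g) \<and> p \<in> Bs then 1 else 0))"

text \<open>The k-linear map delta0 : k(Q_0||B) \<rightarrow> k(Q_1||B); vectors are finitely supported
  coefficient functions on the respective bases.\<close>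
definition delta0 :: "'v set \<Rightarrow> 'a set \<Rightarrow> ('a \<Rightarrow> 'v) \<Rightarrow> ('a \<Rightarrow> 'v) \<Rightarrow> 'a list set
    \<Rightarrow> (('v \<times> ('v, 'a) qpath) \<Rightarrow> 'k::field) \<Rightarrow> (('a \<times> ('v, 'a) qpath) \<Rightarrow> 'k)" where
  "delta0 V E s t Z f = (\<lambda>c. if c \<in> cod_basis V E s t Z
      then (\<Sum>d\<in>dom_basis V E s t Z. f d * delta0_coeff V E s t Z d c) else 0)"

definition delta0_image :: "'v set \<Rightarrow> 'a set \<Rightarrow> ('a \<Rightarrow> 'v) \<Rightarrow> ('a \<Rightarrow> 'v) \<Rightarrow> 'a list set
    \<Rightarrow> (('a \<times> ('v, 'a) qpath) \<Rightarrow> 'k::field) set" where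
  "delta0_image V E s t Z =
     delta0 V E s t Z ` {f. \<forall>d. d \<notin> dom_basis V E s t Z \<longrightarrow> f d = 0}"

definition kdim :: "('c \<Rightarrow> 'k::field) set \<Rightarrow> nat" where
  "kdim S = vector_space.dim (\<lambda>(c::'k) f x. c * f x) S"

definition dim_im_delta0 :: "'k::field itself \<Rightarrow> 'v set \<Rightarrow> 'a set \<Rightarrow> ('a \<Rightarrow> 'v) \<Rightarrow> ('a \<Rightarrow> 'v)
    \<Rightarrow> 'a list set \<Rightarrow> nat" where
  "dim_im_delta0 _ V E s t Z = kdim (delta0_image V E s t Z :: (('a \<times> ('v, 'a) qpath) \<Rightarrow> 'k) set)"

definition adj_rel :: "'a set \<Rightarrow> ('a \<Rightarrow> 'v) \<Rightarrow> ('a \<Rightarrow> 'v) \<Rightarrow> ('v \<times> 'v) set" where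
  "adj_rel E s t = (let R = (\<lambda>a. (s a, t a)) ` E in (R \<union> R\<inverse>)\<^sup>*)"

definition num_components :: "'v set \<Rightarrow> 'a set \<Rightarrow> ('a \<Rightarrow> 'v) \<Rightarrow> ('a \<Rightarrow> 'v) \<Rightarrow> nat" where
  "num_components V E s t = card (V // adj_rel E s t)"

definition glue_v :: "'v \<Rightarrow> 'v \<Rightarrow> 'v \<Rightarrow> 'v" where
  "glue_v e1 en v = (if v = en then e1 else v)"

definition glue_V :: "'v set \<Rightarrow> 'v \<Rightarrow> 'v \<Rightarrow> 'v set" where
  "glue_V V e1 en = V - {en}"

definition glue_Z :: "'a set \<Rightarrow> ('a \<Rightarrow> 'v) \<Rightarrow> ('a \<Rightarrow> 'v) \<Rightarrow> 'a list set \<Rightarrow> 'v \<Rightarrow> 'v \<Rightarrow> 'a list set" where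
  "glue_Z E s t Z e1 en = Z \<union> {[a, b] | a b. a \<in> E \<and> b \<in> E
       \<and> glue_v e1 en (t a) = glue_v e1 en (s b) \<and> t a \<noteq> s b}"

definition isolated :: "'a set \<Rightarrow> ('a \<Rightarrow> 'v) \<Rightarrow> ('a \<Rightarrow> 'v) \<Rightarrow> 'v \<Rightarrow> bool" where
  "isolated E s t v \<longleftrightarrow> (\<forall>a\<in>E. s a \<noteq> v \<and> t a \<noteq> v)"

definition is_source :: "'a set \<Rightarrow> ('a \<Rightarrow> 'v) \<Rightarrow> 'v \<Rightarrow> bool" where
  "is_source E t v \<longleftrightarrow> (\<forall>a\<in>E. t a \<noteq> v)"

definition is_sink :: "'a set \<Rightarrow> ('a \<Rightarrow> 'v) \<Rightarrow> 'v \<Rightarrow> bool" where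
  "is_sink E s v \<longleftrightarrow> (\<forall>a\<in>E. s a \<noteq> v)"

definition rad_square_zero :: "'a set \<Rightarrow> ('a \<Rightarrow> 'v) \<Rightarrow> ('a \<Rightarrow> 'v) \<Rightarrow> 'a list set \<Rightarrow> bool" where
  "rad_square_zero E s t Z \<longleftrightarrow> Z = {[a, b] | a b. a \<in> E \<and> b \<in> E \<and> t a = s b}"

end

theory Submission
  imports Defs
begin

(* The basis element e||e of k(Q_0||B) is sent by delta0 to the signed incidence vector of e,
   which lives on the basis elements a||a, while a nontrivial cycle e||gamma is sent to a vector
   living on paths of length at least 2.  Hence dim Im delta0 is the rank of the incidence matrix
   of the quiver plus the dimension spanned by the columns of the nontrivial cycles.

   Gluing replaces the incidence vectors of e1 and en by their sum.  The incidence vector of e1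
   lies in the span of this sum and the remaining incidence vectors exactly when e1 and en lie in
   different components: the incidence vectors of a component sum to zero, and conversely the
   coefficients of a vanishing combination are constant on components.  So the rank drops by one
   iff e1 and en are connected, while the number of components drops by one iff they are not.

   The columns of nontrivial cycles span the same space in A and in B.  For radical square zero
   algebras they all vanish.  If e1 is a source and en a sink, no nontrivial cycle of A passes
   through them, and the new cycles of B at the glued vertex are paths from e1 to en, which can
   be extended by an arrow on neither side, so their columns vanish. *)

section \<open>Dimensions in coefficient spaces\<close>

abbreviation scale_fun :: "'k::field \<Rightarrow> ('c \<Rightarrow> 'k) \<Rightarrow> 'c \<Rightarrow> 'k"  (infixr \<open>*\<^sub>F\<close> 75)
  where "c *\<^sub>F f \<equiv> \<lambda>x. c * f x"

interpretation fun_vs: vector_space "scale_fun :: 'k::field \<Rightarrow> ('c \<Rightarrow> 'k) \<Rightarrow> 'c \<Rightarrow> 'k"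
  by unfold_locales (auto simp: fun_eq_iff algebra_simps)

lemma kdim_eq_dim: "kdim S = fun_vs.dim S"
  unfolding kdim_def ..

lemma sum_fun_apply: "(\<Sum>i\<in>I. f i) x = (\<Sum>i\<in>I. f i x)"
  by (induction I rule: infinite_finite_induct) auto

lemma span_image_finite:
  assumes "finite I"
  shows "fun_vs.span (g ` I) = range (\<lambda>c. \<Sum>i\<in>I. c i *\<^sub>F (g i :: 'c \<Rightarrow> 'k::field))"
  using assms
proof (induction I)
  case empty
  then show ?case by (auto simp: fun_eq_iff)
next
  case (insert i I)
  have "fun_vs.span (g ` insert i I) = {x. \<exists>k. x - k *\<^sub>F g i \<in> range (\<lambda>c. \<Sum>j\<in>I. c j *\<^sub>F g j)}"
    using fun_vs.span_insert[of "g i" "g ` I"] insert.IH by simp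
  also have "\<dots> = range (\<lambda>c. \<Sum>j\<in>insert i I. c j *\<^sub>F g j)"
  proof safe
    fix x k c
    assume x: "x - k *\<^sub>F g i = (\<Sum>j\<in>I. c j *\<^sub>F g j)"
    have "(\<Sum>j\<in>I. c j *\<^sub>F g j) = (\<Sum>j\<in>I. (c(i := k)) j *\<^sub>F g j)"
      using insert.hyps by (intro sum.cong) auto
    with x insert.hyps show "x \<in> range (\<lambda>c. \<Sum>j\<in>insert i I. c j *\<^sub>F g j)"
      by (intro range_eqI[of _ _ "c(i := k)"]) (auto simp: algebra_simps)
  next
    fix c
    show "\<exists>k. (\<Sum>j\<in>insert i I. c j *\<^sub>F g j) - k *\<^sub>F g i \<in> range (\<lambda>c. \<Sum>j\<in>I. c j *\<^sub>F g j)"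
      using insert.hyps by (intro exI[of _ "c i"]) simp
  qed
  finally show ?case .
qed

(* In an infinite-dimensional space, dim is the cardinality of a basis and hence 0 when every
   basis is infinite; this is why finiteness is assumed below. *)
lemma (in vector_space) dim_insert_finite:
  assumes "finite S"
  shows "dim (insert x S) = (if x \<in> span S then dim S else Suc (dim S))"
proof (cases "x \<in> span S")
  case True
  then show ?thesis
    by (metis dim_span span_redundant)
next
  case False
  obtain B where B: "B \<subseteq> S" "independent B" "S \<subseteq> span B" "card B = dim S"
    by (rule basis_exists)
  have "finite B"
    using B(1) assms by (rule finite_subset)
  moreover have "x \<notin> span B"
    using False B(1) span_mono by blast
  moreover have "card (insert x B) = dim (insert x S)"
    using B \<open>x \<notin> span B\<close> span_mono[of B "insert x B"]
    by (intro basis_card_eq_dim independent_insertI) (auto intro: span_base)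
  moreover have "x \<notin> B"
    using \<open>x \<notin> span B\<close> span_base by blast
  ultimately show ?thesis
    using False B(4) by simp
qed

lemma (in vector_space_pair) dim_image_eq_inj_on:
  assumes "Vector_Spaces.linear s1 s2 f" and "inj_on f (vs1.span S)"
  shows "vs2.dim (f ` S) = vs1.dim S"
proof -
  interpret f: Vector_Spaces.linear s1 s2 f by fact
  obtain B where B: "B \<subseteq> S" "vs1.independent B" "S \<subseteq> vs1.span B" "card B = vs1.dim S"
    by (rule vs1.basis_exists)
  have inj_B: "inj_on f (vs1.span B)"
    using assms(2) B(1) vs1.span_mono inj_on_subset by metis
  have "vs2.independent (f ` B)"
    using B(2) inj_B by (rule f.independent_injective_image)
  moreover have "f ` S \<subseteq> vs2.span (f ` B)"
    using B(3) by (rule f.spans_image)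
  moreover have "card (f ` B) = card B"
    using inj_B vs1.span_superset by (intro card_image) (rule inj_on_subset)
  ultimately show ?thesis
    using B(1,4) vs2.basis_card_eq_dim[of "f ` B" "f ` S"] by (metis image_mono)
qed

interpretation fun_vs_pair: vector_space_pair
  "scale_fun :: 'k::field \<Rightarrow> ('c \<Rightarrow> 'k) \<Rightarrow> 'c \<Rightarrow> 'k" "scale_fun :: 'k \<Rightarrow> ('d \<Rightarrow> 'k) \<Rightarrow> 'd \<Rightarrow> 'k"
  ..

lemma support_sum_subset:
  assumes "\<And>f. f \<in> F \<Longrightarrow> {c. f c \<noteq> 0} \<subseteq> S"
  shows "{c. (\<Sum>f\<in>F. u f *\<^sub>F f) c \<noteq> (0::'k::field)} \<subseteq> S"
proof
  fix c
  assume "c \<in> {c. (\<Sum>f\<in>F. u f *\<^sub>F f) c \<noteq> 0}"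
  then have "(\<Sum>f\<in>F. u f * f c) \<noteq> 0"
    by (simp add: sum_fun_apply)
  then obtain f where "f \<in> F" "f c \<noteq> 0"
    by (metis (mono_tags, lifting) mult_zero_right sum.neutral)
  then show "c \<in> S"
    using assms by blast
qed

lemma disjoint_if_disjoint_support:
  fixes X Y :: "('c \<Rightarrow> 'k::field) set"
  assumes "fun_vs.independent X"
    and "\<And>f. f \<in> X \<Longrightarrow> {c. f c \<noteq> 0} \<subseteq> S" and "\<And>f. f \<in> Y \<Longrightarrow> {c. f c \<noteq> 0} \<subseteq> T"
    and "S \<inter> T = {}"
  shows "X \<inter> Y = {}"
proof (rule ccontr)
  assume "X \<inter> Y \<noteq> {}"
  then obtain f where f: "f \<in> X" "f \<in> Y"
    by blast
  then have "f = 0"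
    using assms(2-4) by (fastforce simp: fun_eq_iff)
  then show False
    using f(1) assms(1) fun_vs.dependent_zero by blast
qed

lemma independent_Un_disjoint_support:
  fixes X Y :: "('c \<Rightarrow> 'k::field) set"
  assumes "fun_vs.independent X" "fun_vs.independent Y" "finite X" "finite Y"
    and supp_X: "\<And>f. f \<in> X \<Longrightarrow> {c. f c \<noteq> 0} \<subseteq> S"
    and supp_Y: "\<And>f. f \<in> Y \<Longrightarrow> {c. f c \<noteq> 0} \<subseteq> T"
    and "S \<inter> T = {}"
  shows "fun_vs.independent (X \<union> Y)"
proof (rule fun_vs.independent_if_scalars_zero)
  show "finite (X \<union> Y)"
    using assms(3,4) by simp
  have disjoint: "X \<inter> Y = {}"
    using assms(1) supp_X supp_Y \<open>S \<inter> T = {}\<close> by (rule disjoint_if_disjoint_support)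
  fix u f
  assume sum0: "(\<Sum>x\<in>X \<union> Y. u x *\<^sub>F x) = 0" and f: "f \<in> X \<union> Y"
  define P where "P = (\<Sum>x\<in>X. u x *\<^sub>F x)"
  define Q where "Q = (\<Sum>x\<in>Y. u x *\<^sub>F x)"
  have PQ: "P c + Q c = 0" for c
    using sum0 assms(3,4) disjoint by (simp add: P_def Q_def sum.union_disjoint fun_eq_iff)
  have supp: "{c. P c \<noteq> 0} \<subseteq> S" "{c. Q c \<noteq> 0} \<subseteq> T"
    unfolding P_def Q_def using supp_X supp_Y by (intro support_sum_subset; blast)+
  have "P c = 0" for c
  proof (cases "c \<in> S")
    case True
    then have "Q c = 0"
      using supp(2) \<open>S \<inter> T = {}\<close> by blast
    then show ?thesis
      using PQ[of c] by simp
  qed (use supp(1) in blast)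
  then have "P = 0" "Q = 0"
    using PQ by (auto simp: fun_eq_iff)
  then show "u f = 0"
    using f assms(1-4) unfolding P_def Q_def by (auto intro: fun_vs.independentD)
qed

lemma dim_Un_disjoint_support:
  fixes X Y :: "('c \<Rightarrow> 'k::field) set"
  assumes "finite X" "finite Y"
    and supp_X: "\<And>f. f \<in> X \<Longrightarrow> {c. f c \<noteq> 0} \<subseteq> S"
    and supp_Y: "\<And>f. f \<in> Y \<Longrightarrow> {c. f c \<noteq> 0} \<subseteq> T"
    and "S \<inter> T = {}"
  shows "fun_vs.dim (X \<union> Y) = fun_vs.dim X + fun_vs.dim Y"
proof -
  obtain BX where BX: "BX \<subseteq> X" "fun_vs.independent BX" "X \<subseteq> fun_vs.span BX" "card BX = fun_vs.dim X"
    by (rule fun_vs.basis_exists)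
  obtain BY where BY: "BY \<subseteq> Y" "fun_vs.independent BY" "Y \<subseteq> fun_vs.span BY" "card BY = fun_vs.dim Y"
    by (rule fun_vs.basis_exists)
  have fin: "finite BX" "finite BY"
    using BX(1) BY(1) assms(1,2) finite_subset by auto
  have disjoint: "BX \<inter> BY = {}"
    using BX(1,2) BY(1) supp_X supp_Y \<open>S \<inter> T = {}\<close> by (intro disjoint_if_disjoint_support[where S = S and T = T]) blast+
  have "fun_vs.independent (BX \<union> BY)"
    using BX(1,2) BY(1,2) fin supp_X supp_Y \<open>S \<inter> T = {}\<close>
    by (intro independent_Un_disjoint_support[where S = S and T = T]) blast+
  moreover have "BX \<union> BY \<subseteq> X \<union> Y" "X \<union> Y \<subseteq> fun_vs.span (BX \<union> BY)"
    using BX BY fun_vs.span_mono[of BX "BX \<union> BY"] fun_vs.span_mono[of BY "BX \<union> BY"] by auto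
  ultimately have "fun_vs.dim (X \<union> Y) = card (BX \<union> BY)"
    by (simp add: fun_vs.basis_card_eq_dim)
  then show ?thesis
    using BX(4) BY(4) fin disjoint by (simp add: card_Un_disjoint)
qed

lemma span_subset_zero: "X \<subseteq> {0} \<Longrightarrow> fun_vs.span X = fun_vs.span {}"
  by (metis fun_vs.span_insert_0 subset_singletonD)

section \<open>Basis paths\<close>

lemma contains_sub_pair_iff:
  "contains_sub as [x, y] \<longleftrightarrow> (\<exists>i. Suc i < length as \<and> as ! i = x \<and> as ! Suc i = y)"
proof
  assume "contains_sub as [x, y]"
  then obtain u w where "as = u @ [x, y] @ w"
    unfolding contains_sub_def by blast
  then show "\<exists>i. Suc i < length as \<and> as ! i = x \<and> as ! Suc i = y"
    by (intro exI[of _ "length u"]) (simp add: nth_append)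
next
  assume "\<exists>i. Suc i < length as \<and> as ! i = x \<and> as ! Suc i = y"
  then obtain i where i: "Suc i < length as" "as ! i = x" "as ! Suc i = y"
    by blast
  have "as = take i as @ as ! i # drop (Suc i) as"
    using i(1) by (intro id_take_nth_drop) simp
  also have "drop (Suc i) as = as ! Suc i # drop (Suc (Suc i)) as"
    using i(1) by (rule Cons_nth_drop_Suc[symmetric])
  finally have "as = take i as @ [x, y] @ drop (Suc (Suc i)) as"
    using i(2,3) by simp
  then show "contains_sub as [x, y]"
    unfolding contains_sub_def by blast
qed

lemma arrow_seq_snoc_last:
  assumes "arrow_seq E s t (xs @ [a])" and "xs \<noteq> []"
  shows "t (last xs) = s a"
  using assms(1) spec[of _ "length xs - 1"] assms(2)
  by (auto simp: arrow_seq_def nth_append last_conv_nth)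

lemma arrow_seq_Cons_hd:
  assumes "arrow_seq E s t (a # xs)" and "xs \<noteq> []"
  shows "t a = s (hd xs)"
  using assms(1) spec[of _ 0] assms(2)
  by (auto simp: arrow_seq_def hd_conv_nth)

lemma finite_basis_paths:
  assumes "monomial_data V E s t Z"
  shows "finite (basis_paths V E s t Z)"
proof -
  have "\<exists>m. \<forall>p. valid_path V E s t p \<and> length (snd p) \<ge> m \<longrightarrow> (\<exists>z\<in>Z. contains_sub (snd p) z)"
    using assms unfolding monomial_data_def by (elim conjE)
  then obtain m
    where m: "\<forall>p. valid_path V E s t p \<and> length (snd p) \<ge> m \<longrightarrow> (\<exists>z\<in>Z. contains_sub (snd p) z)"
    by blast
  have "basis_paths V E s t Z \<subseteq> V \<times> {as. set as \<subseteq> E \<and> length as \<le> m}"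
  proof
    fix p
    assume p: "p \<in> basis_paths V E s t Z"
    then have "\<not> length (snd p) \<ge> m"
      using m unfolding basis_paths_def by blast
    moreover have "fst p \<in> V" "set (snd p) \<subseteq> E"
      using p by (simp_all add: basis_paths_def valid_path_def arrow_seq_def)
    ultimately show "p \<in> V \<times> {as. set as \<subseteq> E \<and> length as \<le> m}"
      by (cases p) simp
  qed
  moreover have "finite (V \<times> {as. set as \<subseteq> E \<and> length as \<le> m})"
    using assms by (simp add: monomial_data_def quiver_def finite_lists_length_le)
  ultimately show ?thesis
    by (rule finite_subset)
qed

lemma trivial_path_in_basis_paths:
  assumes "v \<in> V" and "\<forall>z\<in>Z. 2 \<le> length z"
  shows "(v, []) \<in> basis_paths V E s t Z"
  using assms by (force simp: basis_paths_def valid_path_def arrow_seq_def contains_sub_def)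

lemma arrow_path_in_basis_paths:
  assumes "a \<in> E" "s a \<in> V" and "\<forall>z\<in>Z. 2 \<le> length z"
  shows "(s a, [a]) \<in> basis_paths V E s t Z"
proof -
  have "\<not> contains_sub [a] z" if "z \<in> Z" for z
    using assms(3) that by (fastforce simp: contains_sub_def Cons_eq_append_conv)
  then show ?thesis
    using assms(1,2) by (simp add: basis_paths_def valid_path_def arrow_seq_def)
qed

lemma basis_path_length_rad_square_zero:
  assumes "rad_square_zero E s t Z" and p: "p \<in> basis_paths V E s t Z"
  shows "length (snd p) \<le> 1"
proof (rule ccontr)
  let ?as = "snd p"
  assume "\<not> length ?as \<le> 1"
  then have i: "Suc 0 < length ?as"
    by simp
  have seq: "arrow_seq E s t ?as" and avoids: "\<forall>z\<in>Z. \<not> contains_sub ?as z"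
    using p by (auto simp: basis_paths_def valid_path_def)
  moreover have "?as ! 0 \<in> set ?as" "?as ! Suc 0 \<in> set ?as"
    using i by (auto intro!: nth_mem)
  ultimately have "?as ! 0 \<in> E" "?as ! Suc 0 \<in> E" "t (?as ! 0) = s (?as ! Suc 0)"
    using i by (auto simp: arrow_seq_def)
  then have "[?as ! 0, ?as ! Suc 0] \<in> Z"
    using assms(1) by (auto simp: rad_square_zero_def)
  moreover have "contains_sub ?as [?as ! 0, ?as ! Suc 0]"
    using i by (auto simp: contains_sub_pair_iff)
  ultimately show False
    using avoids by blast
qed

section \<open>The columns of delta0\<close>

lemma delta0_coeff_eq_0_off_cod_basis:
  assumes "d \<in> dom_basis V E s t Z" and "c \<notin> cod_basis V E s t Z"
  shows "delta0_coeff V E s t Z d c = 0"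
proof -
  obtain e g a p where dc: "d = (e, g)" "c = (a, p)"
    by (cases d, cases c)
  have g: "fst g = e" "pend t g = e"
    using assms(1) by (auto simp: dc dom_basis_def)
  have "pend t (s a, a # snd g) = t a" if "t a = e"
    using g that by (auto simp: pend_def)
  then show ?thesis
    using assms(2) g by (auto simp: dc delta0_coeff_def cod_basis_def pend_def Let_def)
qed

lemma delta0_eq_sum_coeff:
  "delta0 V E s t Z f = (\<Sum>d\<in>dom_basis V E s t Z. f d *\<^sub>F delta0_coeff V E s t Z d)"
  by (auto simp: fun_eq_iff delta0_def sum_fun_apply delta0_coeff_eq_0_off_cod_basis)

lemma delta0_image_eq_span:
  assumes "finite (dom_basis V E s t Z)"
  shows "(delta0_image V E s t Z :: (_ \<Rightarrow> 'k::field) set)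
           = fun_vs.span (delta0_coeff V E s t Z ` dom_basis V E s t Z)"
proof -
  let ?D = "dom_basis V E s t Z"
  let ?comb = "\<lambda>c :: _ \<Rightarrow> 'k. \<Sum>d\<in>?D. c d *\<^sub>F delta0_coeff V E s t Z d"
  have "?comb c \<in> ?comb ` {c. \<forall>d. d \<notin> ?D \<longrightarrow> c d = 0}" for c
  proof (rule image_eqI)
    show "?comb c = ?comb (\<lambda>d. if d \<in> ?D then c d else 0)"
      by (rule sum.cong) auto
  qed simp
  then have "range ?comb = ?comb ` {c. \<forall>d. d \<notin> ?D \<longrightarrow> c d = 0}"
    by blast
  also have "\<dots> = delta0_image V E s t Z"
    unfolding delta0_image_def delta0_eq_sum_coeff ..
  finally show ?thesis
    by (simp add: span_image_finite[OF assms])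
qed

lemma dim_im_delta0_eq_dim_coeffs:
  assumes "finite (dom_basis V E s t Z)"
  shows "dim_im_delta0 (K :: 'k::field itself) V E s t Z
           = fun_vs.dim ((delta0_coeff V E s t Z :: _ \<Rightarrow> _ \<Rightarrow> 'k) ` dom_basis V E s t Z)"
  unfolding dim_im_delta0_def kdim_eq_dim delta0_image_eq_span[OF assms] fun_vs.dim_span ..

definition incidence :: "'a set \<Rightarrow> ('a \<Rightarrow> 'v) \<Rightarrow> ('a \<Rightarrow> 'v) \<Rightarrow> 'v \<Rightarrow> 'a \<Rightarrow> 'k::ring_1" where
  "incidence E s t v a = (if a \<in> E then of_bool (s a = v) - of_bool (t a = v) else 0)"

definition arrow_embed :: "('a \<Rightarrow> 'v) \<Rightarrow> ('a \<Rightarrow> 'k::zero) \<Rightarrow> 'a \<times> ('v, 'a) qpath \<Rightarrow> 'k" where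
  "arrow_embed s f = (\<lambda>(a, p). if p = (s a, [a]) then f a else 0)"

definition nontrivial_dom_basis :: "'v set \<Rightarrow> 'a set \<Rightarrow> ('a \<Rightarrow> 'v) \<Rightarrow> ('a \<Rightarrow> 'v) \<Rightarrow> 'a list set
    \<Rightarrow> ('v \<times> ('v, 'a) qpath) set" where
  "nontrivial_dom_basis V E s t Z = {d \<in> dom_basis V E s t Z. snd (snd d) \<noteq> []}"

lemma delta0_coeff_trivial_path:
  assumes "\<forall>a\<in>E. s a \<in> V" and "\<forall>z\<in>Z. 2 \<le> length z"
  shows "delta0_coeff V E s t Z (v, (v, [])) = arrow_embed s (incidence E s t v)"
  using arrow_path_in_basis_paths[of _ E s V Z t] assms
  by (auto simp: fun_eq_iff delta0_coeff_def arrow_embed_def incidence_def)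

lemma dim_arrow_embed_image:
  "fun_vs.dim (arrow_embed s ` X) = fun_vs.dim (X :: ('a \<Rightarrow> 'k::field) set)"
proof (rule fun_vs_pair.dim_image_eq_inj_on)
  show "Vector_Spaces.linear (*\<^sub>F) (*\<^sub>F) (arrow_embed s :: ('a \<Rightarrow> 'k) \<Rightarrow> _)"
    by unfold_locales (auto simp: arrow_embed_def fun_eq_iff)
  have "f = g" if "arrow_embed s f = arrow_embed s g" for f g :: "'a \<Rightarrow> 'k"
  proof
    fix a
    show "f a = g a"
      using fun_cong[OF that, of "(a, (s a, [a]))"] by (simp add: arrow_embed_def)
  qed
  then show "inj_on (arrow_embed s) (fun_vs.span X)"
    by (rule inj_onI)
qed

lemma dom_basis_eq_trivial_Un_nontrivial:
  assumes "\<forall>z\<in>Z. 2 \<le> length z"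
  shows "dom_basis V E s t Z = (\<lambda>v. (v, (v, []))) ` V \<union> nontrivial_dom_basis V E s t Z"
proof (intro equalityI subsetI)
  fix d
  assume d: "d \<in> dom_basis V E s t Z"
  obtain e g where "d = (e, g)"
    by (cases d)
  with d show "d \<in> (\<lambda>v. (v, (v, []))) ` V \<union> nontrivial_dom_basis V E s t Z"
    by (cases g) (auto simp: dom_basis_def nontrivial_dom_basis_def)
next
  fix d
  assume "d \<in> (\<lambda>v. (v, (v, []))) ` V \<union> nontrivial_dom_basis V E s t Z"
  then show "d \<in> dom_basis V E s t Z"
    using trivial_path_in_basis_paths[OF _ assms]
    by (auto simp: dom_basis_def nontrivial_dom_basis_def pend_def)
qed

lemma support_delta0_coeff_nontrivial:
  assumes "d \<in> nontrivial_dom_basis V E s t Z" and "delta0_coeff V E s t Z d c \<noteq> 0"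
  shows "2 \<le> length (snd (snd c))"
proof -
  obtain e g a p where dc: "d = (e, g)" "c = (a, p)"
    by (cases d, cases c)
  have "snd g \<noteq> []"
    using assms(1) by (simp add: dc nontrivial_dom_basis_def)
  moreover have "p = (fst g, snd g @ [a]) \<or> p = (s a, a # snd g)"
    using assms(2) by (auto simp: dc delta0_coeff_def Let_def split: if_splits)
  ultimately show ?thesis
    by (cases "snd g") (auto simp: dc)
qed

lemma dim_im_delta0_split:
  assumes "quiver V E s t" and "\<forall>z\<in>Z. 2 \<le> length z" and "finite (basis_paths V E s t Z)"
  shows "dim_im_delta0 (K :: 'k::field itself) V E s t Z
           = fun_vs.dim ((incidence E s t :: _ \<Rightarrow> _ \<Rightarrow> 'k) ` V)
             + fun_vs.dim ((delta0_coeff V E s t Z :: _ \<Rightarrow> _ \<Rightarrow> 'k) ` nontrivial_dom_basis V E s t Z)"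
proof -
  let ?D = "dom_basis V E s t Z" and ?D1 = "nontrivial_dom_basis V E s t Z"
  let ?coeff = "delta0_coeff V E s t Z :: _ \<Rightarrow> _ \<Rightarrow> 'k"
  let ?inc = "incidence E s t :: _ \<Rightarrow> _ \<Rightarrow> 'k"
  have finV: "finite V" and sV: "\<forall>a\<in>E. s a \<in> V"
    using assms(1) by (auto simp: quiver_def)
  have "?D \<subseteq> V \<times> basis_paths V E s t Z"
    by (auto simp: dom_basis_def)
  then have finD: "finite ?D"
    using finV assms(3) finite_subset by blast
  have "?coeff ` ?D = arrow_embed s ` ?inc ` V \<union> ?coeff ` ?D1"
    by (simp add: dom_basis_eq_trivial_Un_nontrivial[OF assms(2)] image_Un image_image
        delta0_coeff_trivial_path[OF sV assms(2)])
  also have "fun_vs.dim \<dots> = fun_vs.dim (arrow_embed s ` ?inc ` V) + fun_vs.dim (?coeff ` ?D1)"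
  proof (rule dim_Un_disjoint_support)
    show "finite (arrow_embed s ` ?inc ` V)" "finite (?coeff ` ?D1)"
      using finV finD by (simp_all add: nontrivial_dom_basis_def)
    show "{c. f c \<noteq> 0} \<subseteq> {c. length (snd (snd c)) = 1}" if "f \<in> arrow_embed s ` ?inc ` V" for f
      using that by (auto simp: arrow_embed_def split: if_splits)
    show "{c. f c \<noteq> 0} \<subseteq> {c. 2 \<le> length (snd (snd c))}" if "f \<in> ?coeff ` ?D1" for f
      using that support_delta0_coeff_nontrivial by blast
  qed auto
  finally show ?thesis
    by (simp add: dim_im_delta0_eq_dim_coeffs[OF finD] dim_arrow_embed_image)
qed

lemma delta0_coeff_nontrivial_eq_0:
  assumes "\<forall>p\<in>basis_paths V E s t Z. length (snd p) \<le> 1" and "d \<in> nontrivial_dom_basis V E s t Z"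
  shows "delta0_coeff V E s t Z d = 0"
proof
  fix c
  show "delta0_coeff V E s t Z d c = 0 c"
  proof (rule ccontr)
    assume nonzero: "delta0_coeff V E s t Z d c \<noteq> 0 c"
    then have "snd c \<in> basis_paths V E s t Z"
      by (auto simp: delta0_coeff_def Let_def split: prod.splits if_splits)
    moreover have "2 \<le> length (snd (snd c))"
      using nonzero assms(2) support_delta0_coeff_nontrivial by fastforce
    ultimately show False
      using assms(1) by fastforce
  qed
qed

section \<open>Incidence vectors and connected components\<close>

lemma sum_incidence_apply:
  assumes "finite C"
  shows "(\<Sum>v\<in>C. h v *\<^sub>F incidence E s t v) a
           = (if a \<in> E then (if s a \<in> C then h (s a) else 0) - (if t a \<in> C then h (t a) else 0)
              else (0 :: 'k::field))"
proof -
  have "(\<Sum>v\<in>C. h v *\<^sub>F incidence E s t v) a = (\<Sum>v\<in>C. h v * incidence E s t v a)"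
    by (rule sum_fun_apply)
  also have "\<dots> = (if a \<in> E then (\<Sum>v\<in>C. if s a = v then h v else 0) - (\<Sum>v\<in>C. if t a = v then h v else 0)
                     else 0)"
  proof (cases "a \<in> E")
    case True
    then have "(\<Sum>v\<in>C. h v * incidence E s t v a)
        = (\<Sum>v\<in>C. (if s a = v then h v else 0) - (if t a = v then h v else 0))"
      by (intro sum.cong) (auto simp: incidence_def)
    then show ?thesis
      using True by (simp add: sum_subtractf)
  qed (simp add: incidence_def)
  finally show ?thesis
    using assms by simp
qed

definition link_rel :: "'a set \<Rightarrow> ('a \<Rightarrow> 'v) \<Rightarrow> ('a \<Rightarrow> 'v) \<Rightarrow> 'v rel" where
  "link_rel E s t = (\<lambda>a. (s a, t a)) ` E \<union> ((\<lambda>a. (s a, t a)) ` E)\<inverse>"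

lemma adj_rel_eq_rtrancl_link_rel: "adj_rel E s t = (link_rel E s t)\<^sup>*"
  by (simp add: adj_rel_def link_rel_def Let_def)

lemma sym_link_rel: "sym (link_rel E s t)"
  unfolding link_rel_def by (rule sym_Un_converse)

lemma equiv_rtrancl_sym: "sym R \<Longrightarrow> equiv UNIV (R\<^sup>*)"
  unfolding equiv_def by (simp add: refl_rtrancl sym_rtrancl trans_rtrancl)

lemma equiv_adj_rel: "equiv UNIV (adj_rel E s t)"
  unfolding adj_rel_eq_rtrancl_link_rel by (rule equiv_rtrancl_sym[OF sym_link_rel])

lemma adj_rel_invariant:
  assumes "(x, y) \<in> adj_rel E s t" and "\<And>a. a \<in> E \<Longrightarrow> f (s a) = f (t a)"
  shows "f x = f y"
  using assms(1) unfolding adj_rel_eq_rtrancl_link_rel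
  by (induction rule: rtrancl_induct) (auto simp: link_rel_def assms(2))

lemma incidence_relation_constant_on_components:
  assumes "finite V" and "\<forall>a\<in>E. s a \<in> V \<and> t a \<in> V"
    and "(\<Sum>v\<in>V. h v *\<^sub>F incidence E s t v) = (0 :: _ \<Rightarrow> 'k::field)"
    and "(x, y) \<in> adj_rel E s t"
  shows "h x = h y"
proof (rule adj_rel_invariant[OF assms(4)])
  fix a
  assume "a \<in> E"
  then show "h (s a) = h (t a)"
    using fun_cong[OF assms(3), of a] assms(2) by (simp add: sum_incidence_apply[OF assms(1)])
qed

lemma sum_incidence_closed_eq_0:
  assumes "finite C" and "\<And>a. a \<in> E \<Longrightarrow> s a \<in> C \<longleftrightarrow> t a \<in> C"
  shows "(\<Sum>v\<in>C. incidence E s t v) = (0 :: _ \<Rightarrow> 'k::field)"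
proof
  fix a
  show "(\<Sum>v\<in>C. incidence E s t v) a = (0 :: _ \<Rightarrow> 'k) a"
    using sum_incidence_apply[OF assms(1), of "\<lambda>_. 1" E s t a] assms(2)[of a]
    by (cases "a \<in> E"; cases "s a \<in> C") auto
qed

lemma rtrancl_Un_edge_iff:
  assumes "sym R"
  shows "(u, w) \<in> (R \<union> {(x, y), (y, x)})\<^sup>*
    \<longleftrightarrow> (u, w) \<in> R\<^sup>* \<or> (u, x) \<in> R\<^sup>* \<and> (y, w) \<in> R\<^sup>* \<or> (u, y) \<in> R\<^sup>* \<and> (x, w) \<in> R\<^sup>*"
proof
  have sym_R: "(b, a) \<in> R\<^sup>*" if "(a, b) \<in> R\<^sup>*" for a b
    using that sym_rtrancl[OF assms] by (rule symD[rotated])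
  assume "(u, w) \<in> (R \<union> {(x, y), (y, x)})\<^sup>*"
  then show "(u, w) \<in> R\<^sup>* \<or> (u, x) \<in> R\<^sup>* \<and> (y, w) \<in> R\<^sup>* \<or> (u, y) \<in> R\<^sup>* \<and> (x, w) \<in> R\<^sup>*"
  proof (induction rule: rtrancl_induct)
    case (step v z)
    then show ?case
      by (blast intro: rtrancl_into_rtrancl rtrancl_trans sym_R)
  qed simp
next
  have "R\<^sup>* \<subseteq> (R \<union> {(x, y), (y, x)})\<^sup>*" "(x, y) \<in> (R \<union> {(x, y), (y, x)})\<^sup>*"
    "(y, x) \<in> (R \<union> {(x, y), (y, x)})\<^sup>*"
    by (auto intro: rtrancl_mono[THEN subsetD])
  then show "(u, w) \<in> R\<^sup>* \<or> (u, x) \<in> R\<^sup>* \<and> (y, w) \<in> R\<^sup>* \<or> (u, y) \<in> R\<^sup>* \<and> (x, w) \<in> R\<^sup>*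
      \<Longrightarrow> (u, w) \<in> (R \<union> {(x, y), (y, x)})\<^sup>*"
    by (blast intro: rtrancl_trans)
qed

lemma quotient_eq_image: "A // r = (\<lambda>x. r `` {x}) ` A"
  unfolding quotient_def by blast

lemma rtrancl_Un_edge_Image:
  assumes "sym R" and "(x, y) \<notin> R\<^sup>*"
  shows "(R \<union> {(x, y), (y, x)})\<^sup>* `` {v}
           = (if v \<in> R\<^sup>* `` {x} \<union> R\<^sup>* `` {y} then R\<^sup>* `` {x} \<union> R\<^sup>* `` {y} else R\<^sup>* `` {v})"
proof -
  let ?cl = "\<lambda>v. R\<^sup>* `` {v}"
  have cl_eq: "?cl v = ?cl w \<longleftrightarrow> (v, w) \<in> R\<^sup>*" for v w
    using eq_equiv_class_iff[OF equiv_rtrancl_sym[OF assms(1)]] by simp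
  have sym_R: "(v, w) \<in> R\<^sup>* \<longleftrightarrow> (w, v) \<in> R\<^sup>*" for v w
    using sym_rtrancl[OF assms(1)] by (auto dest: symD)
  have "(R \<union> {(x, y), (y, x)})\<^sup>* `` {v}
      = ?cl v \<union> (if (v, x) \<in> R\<^sup>* then ?cl y else {}) \<union> (if (v, y) \<in> R\<^sup>* then ?cl x else {})"
    using rtrancl_Un_edge_iff[OF assms(1), of v _ x y] by auto
  moreover have "(v, x) \<in> R\<^sup>* \<Longrightarrow> (v, y) \<in> R\<^sup>* \<Longrightarrow> False"
    using assms(2) sym_R by (blast intro: rtrancl_trans)
  ultimately show ?thesis
    using cl_eq sym_R by (cases "(v, x) \<in> R\<^sup>*"; cases "(v, y) \<in> R\<^sup>*") auto
qed

lemma card_quotient_Un_edge: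
  assumes "sym R" and "finite V" and "x \<in> V" "y \<in> V" and "(x, y) \<notin> R\<^sup>*"
  shows "Suc (card (V // (R \<union> {(x, y), (y, x)})\<^sup>*)) = card (V // R\<^sup>*)"
proof -
  let ?cl = "\<lambda>v. R\<^sup>* `` {v}"
  define U where "U = ?cl x \<union> ?cl y"
  have cl_eq: "?cl v = ?cl w \<longleftrightarrow> (v, w) \<in> R\<^sup>*" for v w
    using eq_equiv_class_iff[OF equiv_rtrancl_sym[OF assms(1)]] by simp
  have "x \<in> U"
    by (simp add: U_def)
  have "V // (R \<union> {(x, y), (y, x)})\<^sup>* = (\<lambda>v. if v \<in> U then U else ?cl v) ` V"
    unfolding quotient_eq_image rtrancl_Un_edge_Image[OF assms(1,5)] U_def ..
  also have "\<dots> = insert U (?cl ` (V - U))"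
    using assms(3) \<open>x \<in> U\<close> by (auto intro: rev_image_eqI)
  also have "?cl ` (V - U) = V // R\<^sup>* - {?cl x, ?cl y}"
  proof -
    have "v \<notin> U \<longleftrightarrow> ?cl v \<noteq> ?cl x \<and> ?cl v \<noteq> ?cl y" for v
      unfolding U_def cl_eq using sym_rtrancl[OF assms(1)] by (auto dest: symD)
    then show ?thesis
      unfolding quotient_eq_image by blast
  qed
  finally have quot': "V // (R \<union> {(x, y), (y, x)})\<^sup>* = insert U (V // R\<^sup>* - {?cl x, ?cl y})" .
  have "U \<notin> V // R\<^sup>* - {?cl x, ?cl y}"
  proof
    assume "U \<in> V // R\<^sup>* - {?cl x, ?cl y}"
    then obtain v where "U = ?cl v" "U \<noteq> ?cl x"
      unfolding quotient_eq_image by blast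
    moreover have "(v, x) \<in> R\<^sup>*"
      using \<open>x \<in> U\<close> \<open>U = ?cl v\<close> by simp
    ultimately show False
      using cl_eq by blast
  qed
  moreover have sub: "{?cl x, ?cl y} \<subseteq> V // R\<^sup>*"
    using assms(3,4) by (simp add: quotientI)
  moreover have "card {?cl x, ?cl y} = 2"
    using assms(5) cl_eq by simp
  moreover have fin: "finite (V // R\<^sup>*)"
    using assms(2) by (simp add: quotient_eq_image)
  moreover have "card {?cl x, ?cl y} \<le> card (V // R\<^sup>*)"
    using sub fin by (rule card_mono[rotated])
  ultimately show ?thesis
    unfolding quot' by (simp add: card_Diff_subset finite_subset)
qed

lemma card_image_eq_if_same_kernel:
  assumes "finite A" and "\<And>x y. x \<in> A \<Longrightarrow> y \<in> A \<Longrightarrow> f x = f y \<longleftrightarrow> g x = g y"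
  shows "card (f ` A) = card (g ` A)"
proof -
  have key: "g (inv_into A f (f a)) = g a" if "a \<in> A" for a
    using assms(2)[of "inv_into A f (f a)" a] that by (simp add: inv_into_into f_inv_into_f)
  have "bij_betw (\<lambda>c. g (inv_into A f c)) (f ` A) (g ` A)"
  proof (rule bij_betw_imageI)
    show "inj_on (\<lambda>c. g (inv_into A f c)) (f ` A)"
      using assms(2) key by (auto intro!: inj_onI)
    show "(\<lambda>c. g (inv_into A f c)) ` f ` A = g ` A"
      using key by (auto simp: image_image)
  qed
  then show ?thesis
    by (rule bij_betw_same_card)
qed

section \<open>Gluing two vertices\<close>

locale gluing =
  fixes V :: "'v set" and E :: "'a set" and s t :: "'a \<Rightarrow> 'v" and Z :: "'a list set"
    and e1 en :: 'v
  assumes monomial: "monomial_data V E s t Z"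
    and e1_in_V: "e1 \<in> V" and en_in_V: "en \<in> V" and e1_neq_en: "e1 \<noteq> en"
begin

abbreviation "gl \<equiv> glue_v e1 en"
abbreviation "sB \<equiv> glue_v e1 en \<circ> s"
abbreviation "tB \<equiv> glue_v e1 en \<circ> t"
abbreviation "VB \<equiv> glue_V V e1 en"
abbreviation "ZB \<equiv> glue_Z E s t Z e1 en"

lemma quiver: "quiver V E s t"
  using monomial by (simp add: monomial_data_def)

lemma Z_length: "\<forall>z\<in>Z. 2 \<le> length z"
  using monomial by (simp add: monomial_data_def)

lemma gl_in_VB: "v \<in> V \<Longrightarrow> gl v \<in> VB"
  using e1_in_V e1_neq_en by (simp add: glue_v_def glue_V_def)

lemma VB_eq_image: "VB = gl ` V"
  using gl_in_VB by (force simp: glue_v_def glue_V_def)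

lemma VB_subset: "VB \<subseteq> V"
  by (simp add: glue_V_def)

lemma gl_eq_iff: "w \<noteq> e1 \<Longrightarrow> w \<noteq> en \<Longrightarrow> gl v = w \<longleftrightarrow> v = w"
  by (auto simp: glue_v_def)

lemma quiver_glued: "quiver VB E sB tB"
  using quiver gl_in_VB VB_subset finite_subset by (auto simp: quiver_def)

lemma ZB_length: "\<forall>z\<in>ZB. 2 \<le> length z"
  using Z_length by (auto simp: glue_Z_def)

lemma glued_basis_path_lifts:
  assumes p: "p \<in> basis_paths VB E sB tB ZB" and "snd p \<noteq> []"
  shows "(s (hd (snd p)), snd p) \<in> basis_paths V E s t Z \<and> gl (s (hd (snd p))) = fst p"
proof -
  let ?as = "snd p"
  have seq: "arrow_seq E sB tB ?as" and hd: "sB (hd ?as) = fst p"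
    and avoids: "\<forall>z\<in>ZB. \<not> contains_sub ?as z"
    using p assms(2) by (auto simp: basis_paths_def valid_path_def)
  have "t (?as ! i) = s (?as ! Suc i)" if i: "Suc i < length ?as" for i
  proof (rule ccontr)
    assume "t (?as ! i) \<noteq> s (?as ! Suc i)"
    moreover have "?as ! i \<in> E" "?as ! Suc i \<in> E" "gl (t (?as ! i)) = gl (s (?as ! Suc i))"
      using seq i by (auto simp: arrow_seq_def)
    ultimately have "[?as ! i, ?as ! Suc i] \<in> ZB"
      by (auto simp: glue_Z_def)
    moreover have "contains_sub ?as [?as ! i, ?as ! Suc i]"
      using i by (auto simp: contains_sub_pair_iff)
    ultimately show False
      using avoids by blast
  qed
  then have "arrow_seq E s t ?as"
    using seq by (simp add: arrow_seq_def)
  moreover have "s (hd ?as) \<in> V"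
    using seq assms(2) quiver hd_in_set by (fastforce simp: arrow_seq_def quiver_def)
  ultimately show ?thesis
    using avoids hd assms(2) by (auto simp: basis_paths_def valid_path_def glue_Z_def)
qed

lemma basis_path_glues:
  assumes p: "p \<in> basis_paths V E s t Z"
  shows "(gl (fst p), snd p) \<in> basis_paths VB E sB tB ZB"
proof -
  have seq: "arrow_seq E s t (snd p)" and avoids: "\<forall>z\<in>Z. \<not> contains_sub (snd p) z"
    using p by (auto simp: basis_paths_def valid_path_def)
  have "\<not> contains_sub (snd p) [a, b]" if "t a \<noteq> s b" for a b
    using seq that by (auto simp: contains_sub_pair_iff arrow_seq_def)
  then have "\<forall>z\<in>ZB. \<not> contains_sub (snd p) z"
    using avoids by (auto simp: glue_Z_def)
  moreover have "arrow_seq E sB tB (snd p)"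
    using seq by (simp add: arrow_seq_def)
  ultimately show ?thesis
    using p gl_in_VB by (auto simp: basis_paths_def valid_path_def)
qed

lemma basis_paths_glued_eq: "basis_paths VB E sB tB ZB = (\<lambda>p. (gl (fst p), snd p)) ` basis_paths V E s t Z"
proof (intro equalityI subsetI)
  fix p
  assume p: "p \<in> basis_paths VB E sB tB ZB"
  show "p \<in> (\<lambda>p. (gl (fst p), snd p)) ` basis_paths V E s t Z"
  proof (cases "snd p = []")
    case True
    have "fst p \<in> VB"
      using p by (simp add: basis_paths_def valid_path_def)
    then have "(fst p, []) \<in> basis_paths V E s t Z" "gl (fst p) = fst p"
      using trivial_path_in_basis_paths[OF _ Z_length] VB_subset by (auto simp: glue_V_def glue_v_def)
    then show ?thesis
      using True by (intro image_eqI[of _ _ "(fst p, [])"]) (auto simp: prod_eq_iff)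
  next
    case False
    then show ?thesis
      using glued_basis_path_lifts[OF p] by (intro image_eqI[of _ _ "(s (hd (snd p)), snd p)"]) auto
  qed
qed (use basis_path_glues in blast)

lemma finite_basis_paths_glued: "finite (basis_paths VB E sB tB ZB)"
  unfolding basis_paths_glued_eq using finite_basis_paths[OF monomial] by simp

lemma incidence_glued_other:
  assumes "v \<noteq> e1" "v \<noteq> en"
  shows "incidence E sB tB v = incidence E s t v"
  using assms by (auto simp: fun_eq_iff incidence_def glue_v_def)

lemma incidence_glued_e1: "incidence E sB tB e1 = incidence E s t e1 + (incidence E s t en :: _ \<Rightarrow> 'k::ring_1)"
  using e1_neq_en by (auto simp: fun_eq_iff incidence_def glue_v_def)

lemma sum_split_e1_en: "(\<Sum>v\<in>V. f v) = f e1 + f en + (\<Sum>v\<in>V - {e1, en}. f v)"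
proof -
  have fin: "finite V"
    using quiver by (simp add: quiver_def)
  have "(\<Sum>v\<in>V. f v) = f e1 + (\<Sum>v\<in>V - {e1}. f v)"
    using fin e1_in_V by (rule sum.remove)
  also have "(\<Sum>v\<in>V - {e1}. f v) = f en + (\<Sum>v\<in>V - {e1} - {en}. f v)"
    using fin en_in_V e1_neq_en by (intro sum.remove) auto
  finally show ?thesis
    by (simp add: add.assoc Diff_insert2[symmetric])
qed

lemma incidence_e1_notin_span_if_connected:
  fixes x y :: "'a \<Rightarrow> 'k::field"
  defines "x \<equiv> incidence E s t e1" and "y \<equiv> incidence E s t en"
  assumes "(e1, en) \<in> adj_rel E s t"
  shows "x \<notin> fun_vs.span (insert (x + y) (incidence E s t ` (V - {e1, en})))"
proof
  let ?W = "V - {e1, en}"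
  have finV: "finite V" and ends: "\<forall>a\<in>E. s a \<in> V \<and> t a \<in> V"
    using quiver by (auto simp: quiver_def)
  then have finW: "finite ?W"
    by simp
  assume "x \<in> fun_vs.span (insert (x + y) (incidence E s t ` ?W))"
  then obtain k c where kc: "x - k *\<^sub>F (x + y) = (\<Sum>v\<in>?W. c v *\<^sub>F incidence E s t v)"
    by (auto simp: fun_vs.span_breakdown_eq span_image_finite[OF finW])
  \<comment> \<open>the coefficients of the vanishing combination x - k (x + y) - (\<Sum>v\<in>?W. c v incidence v)\<close>
  define h where "h v = (if v = e1 then 1 - k else if v = en then - k else - c v)" for v
  have "(\<Sum>v\<in>V. h v *\<^sub>F incidence E s t v) a = 0" for a
  proof -
    have "(\<Sum>v\<in>?W. h v * incidence E s t v a) = - (\<Sum>v\<in>?W. c v * incidence E s t v a)"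
      by (simp add: h_def sum_negf)
    also have "(\<Sum>v\<in>?W. c v * incidence E s t v a) = x a - k * (x a + y a)"
      using fun_cong[OF kc, of a] by (simp add: sum_fun_apply)
    finally have "(\<Sum>v\<in>?W. h v * incidence E s t v a) = - (x a - k * (x a + y a))" .
    moreover have "h e1 = 1 - k" "h en = - k"
      using e1_neq_en by (simp_all add: h_def)
    ultimately show ?thesis
      unfolding sum_fun_apply sum_split_e1_en[of "\<lambda>v. h v * incidence E s t v a"]
      by (simp add: x_def y_def algebra_simps del: diff_eq_eq eq_diff_eq)
  qed
  then have "(\<Sum>v\<in>V. h v *\<^sub>F incidence E s t v) = 0"
    by (simp add: fun_eq_iff)
  then have "h e1 = h en"
    using incidence_relation_constant_on_components[OF finV ends _ assms(3)] by blast
  then show False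
    using e1_neq_en by (simp add: h_def)
qed

lemma incidence_e1_in_span_if_disconnected:
  fixes x y :: "'a \<Rightarrow> 'k::field"
  defines "x \<equiv> incidence E s t e1" and "y \<equiv> incidence E s t en"
  assumes disconnected: "(e1, en) \<notin> adj_rel E s t"
  shows "x \<in> fun_vs.span (insert (x + y) (incidence E s t ` (V - {e1, en})))"
proof -
  define C where "C = {v \<in> V. (e1, v) \<in> adj_rel E s t}"
  have "finite C"
    using quiver by (simp add: C_def quiver_def)
  have "(e1, e1) \<in> adj_rel E s t"
    by (simp add: adj_rel_eq_rtrancl_link_rel)
  then have "e1 \<in> C" "en \<notin> C"
    using e1_in_V disconnected by (auto simp: C_def)
  have "s a \<in> C \<longleftrightarrow> t a \<in> C" if "a \<in> E" for a
  proof -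
    have "(s a, t a) \<in> link_rel E s t" "(t a, s a) \<in> link_rel E s t"
      using that by (auto simp: link_rel_def)
    then have "(e1, s a) \<in> adj_rel E s t \<longleftrightarrow> (e1, t a) \<in> adj_rel E s t"
      unfolding adj_rel_eq_rtrancl_link_rel by (meson rtrancl.rtrancl_into_rtrancl)
    moreover have "s a \<in> V" "t a \<in> V"
      using that quiver by (auto simp: quiver_def)
    ultimately show ?thesis
      by (simp add: C_def)
  qed
  then have "(\<Sum>v\<in>C. incidence E s t v) = (0 :: _ \<Rightarrow> 'k)"
    using \<open>finite C\<close> by (intro sum_incidence_closed_eq_0)
  then have "x = - (\<Sum>v\<in>C - {e1}. incidence E s t v)"
    using \<open>finite C\<close> \<open>e1 \<in> C\<close> by (simp add: x_def sum.remove eq_neg_iff_add_eq_0)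
  moreover have "C - {e1} \<subseteq> V - {e1, en}"
    using \<open>en \<notin> C\<close> by (auto simp: C_def)
  then have "(\<Sum>v\<in>C - {e1}. incidence E s t v) \<in> fun_vs.span (insert (x + y) (incidence E s t ` (V - {e1, en})))"
    by (intro fun_vs.span_sum fun_vs.span_base) auto
  ultimately show ?thesis
    by (simp add: fun_vs.span_neg)
qed

lemma incidence_e1_in_span_iff:
  "incidence E s t e1 \<in> fun_vs.span (insert (incidence E s t e1 + incidence E s t en)
                                      (incidence E s t ` (V - {e1, en})))
     \<longleftrightarrow> (e1, en) \<notin> adj_rel E s t"
  by (cases "(e1, en) \<in> adj_rel E s t")
    (simp_all add: incidence_e1_notin_span_if_connected incidence_e1_in_span_if_disconnected)

lemma dim_incidence_glued:
  "fun_vs.dim ((incidence E s t :: _ \<Rightarrow> _ \<Rightarrow> 'k::field) ` V)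
     = fun_vs.dim ((incidence E sB tB :: _ \<Rightarrow> _ \<Rightarrow> 'k) ` VB) + (if (e1, en) \<in> adj_rel E s t then 1 else 0)"
proof -
  let ?x = "incidence E s t e1 :: _ \<Rightarrow> 'k" and ?y = "incidence E s t en :: _ \<Rightarrow> 'k"
  let ?T = "(incidence E s t :: _ \<Rightarrow> _ \<Rightarrow> 'k) ` (V - {e1, en})"
  have "VB = insert e1 (V - {e1, en})"
    using e1_in_V e1_neq_en by (auto simp: glue_V_def)
  then have glued: "(incidence E sB tB :: _ \<Rightarrow> _ \<Rightarrow> 'k) ` VB = insert (?x + ?y) ?T"
    by (simp add: incidence_glued_e1 incidence_glued_other)
  have "V = insert e1 (insert en (V - {e1, en}))"
    using e1_in_V en_in_V by auto
  then have V_img: "(incidence E s t :: _ \<Rightarrow> _ \<Rightarrow> 'k) ` V = insert ?x (insert ?y ?T)"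
    by (metis image_insert)
  have "(?x + ?y) - ?x \<in> fun_vs.span (insert ?x (insert (?x + ?y) ?T))"
    by (intro fun_vs.span_diff fun_vs.span_base) auto
  moreover have "?x + ?y \<in> fun_vs.span (insert ?x (insert ?y ?T))"
    by (intro fun_vs.span_add fun_vs.span_base) auto
  ultimately have "fun_vs.span ((incidence E s t :: _ \<Rightarrow> _ \<Rightarrow> 'k) ` V) = fun_vs.span (insert ?x (insert (?x + ?y) ?T))"
    unfolding V_img fun_vs.span_eq by (auto intro: fun_vs.span_base)
  then have "fun_vs.dim ((incidence E s t :: _ \<Rightarrow> _ \<Rightarrow> 'k) ` V) = fun_vs.dim (insert ?x (insert (?x + ?y) ?T))"
    by (rule fun_vs.span_eq_dim)
  also have "\<dots> = fun_vs.dim (insert (?x + ?y) ?T) + (if (e1, en) \<in> adj_rel E s t then 1 else 0)"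
    using quiver by (simp add: fun_vs.dim_insert_finite incidence_e1_in_span_iff quiver_def)
  finally show ?thesis
    by (simp add: glued)
qed

abbreviation "link_glued \<equiv> link_rel E s t \<union> {(e1, en), (en, e1)}"

lemma gl_eq_imp_rel: "gl x = gl y \<Longrightarrow> (x, y) \<in> link_glued\<^sup>*"
  by (auto simp: glue_v_def split: if_splits)

lemma rel_imp_glued_adj_rel:
  "(x, y) \<in> link_glued\<^sup>* \<Longrightarrow> (gl x, gl y) \<in> adj_rel E sB tB"
proof (induction rule: rtrancl_induct)
  case (step y z)
  then have "(gl y, gl z) \<in> link_rel E sB tB \<or> gl y = gl z"
    by (auto simp: link_rel_def glue_v_def)
  with step.IH show ?case
    unfolding adj_rel_eq_rtrancl_link_rel by (auto intro: rtrancl_into_rtrancl)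
qed (simp add: adj_rel_eq_rtrancl_link_rel)

lemma glued_adj_rel_imp_rel:
  "(u, w) \<in> adj_rel E sB tB \<Longrightarrow> gl x = u \<Longrightarrow> gl y = w \<Longrightarrow> (x, y) \<in> link_glued\<^sup>*"
  unfolding adj_rel_eq_rtrancl_link_rel
proof (induction arbitrary: y rule: rtrancl_induct)
  case base
  then show ?case
    by (intro gl_eq_imp_rel) simp
next
  case (step w z)
  from step.hyps(2) obtain a where "a \<in> E"
    and "(w, z) = (sB a, tB a) \<or> (w, z) = (tB a, sB a)"
    by (auto simp: link_rel_def)
  then obtain b c where bc: "(b, c) \<in> link_rel E s t" "gl b = w" "gl c = z"
    by (auto simp: link_rel_def)
  have "(x, b) \<in> link_glued\<^sup>*"
    using step.IH step.prems(1) bc(2) by blast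
  moreover have "(c, y) \<in> link_glued\<^sup>*"
    using step.prems(2) bc(3) by (intro gl_eq_imp_rel) simp
  ultimately show ?case
    using bc(1) by (blast intro: rtrancl_trans rtrancl_into_rtrancl)
qed

lemma glued_adj_rel_iff: "(gl x, gl y) \<in> adj_rel E sB tB \<longleftrightarrow> (x, y) \<in> link_glued\<^sup>*"
  using rel_imp_glued_adj_rel glued_adj_rel_imp_rel by blast

lemma num_components_glued_eq: "num_components VB E sB tB = card (V // link_glued\<^sup>*)"
proof -
  have "num_components VB E sB tB = card ((\<lambda>x. adj_rel E sB tB `` {gl x}) ` V)"
    by (simp add: num_components_def quotient_eq_image VB_eq_image image_image)
  also have "\<dots> = card ((\<lambda>x. link_glued\<^sup>* `` {x}) ` V)"
  proof (rule card_image_eq_if_same_kernel)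
    show "finite V"
      using quiver by (simp add: quiver_def)
    have "equiv UNIV (link_glued\<^sup>*)"
      by (rule equiv_rtrancl_sym) (auto simp: sym_def link_rel_def)
    then show "adj_rel E sB tB `` {gl x} = adj_rel E sB tB `` {gl y}
        \<longleftrightarrow> link_glued\<^sup>* `` {x} = link_glued\<^sup>* `` {y}" for x y
      by (simp add: eq_equiv_class_iff[OF equiv_adj_rel] eq_equiv_class_iff glued_adj_rel_iff)
  qed
  finally show ?thesis
    by (simp add: quotient_eq_image)
qed

lemma num_components_glued:
  "num_components V E s t = num_components VB E sB tB + (if (e1, en) \<in> adj_rel E s t then 0 else 1)"
proof (cases "(e1, en) \<in> adj_rel E s t")
  case True
  then have "(e1, en) \<in> (link_rel E s t)\<^sup>*" "(en, e1) \<in> (link_rel E s t)\<^sup>*"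
    using symD[OF sym_rtrancl[OF sym_link_rel]] by (auto simp: adj_rel_eq_rtrancl_link_rel)
  then have "(u, w) \<in> link_glued\<^sup>* \<longleftrightarrow> (u, w) \<in> (link_rel E s t)\<^sup>*" for u w
    using rtrancl_Un_edge_iff[OF sym_link_rel, where x = e1 and y = en] by (blast intro: rtrancl_trans)
  then have "link_glued\<^sup>* = (link_rel E s t)\<^sup>*"
    by (intro subset_antisym subrelI) simp_all
  then have "num_components VB E sB tB = card (V // (link_rel E s t)\<^sup>*)"
    by (simp only: num_components_glued_eq)
  with True show ?thesis
    by (simp add: num_components_def adj_rel_eq_rtrancl_link_rel)
next
  case False
  have "finite V"
    using quiver by (simp add: quiver_def)
  with False have "Suc (card (V // link_glued\<^sup>*)) = card (V // (link_rel E s t)\<^sup>*)"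
    by (intro card_quotient_Un_edge[OF sym_link_rel _ e1_in_V en_in_V])
      (simp_all add: adj_rel_eq_rtrancl_link_rel)
  with False show ?thesis
    by (simp add: num_components_glued_eq num_components_def[of V] adj_rel_eq_rtrancl_link_rel)
qed

lemma span_nontrivial_coeffs_rad_square_zero:
  assumes "rad_square_zero E s t Z"
  shows "fun_vs.span ((delta0_coeff V E s t Z :: _ \<Rightarrow> _ \<Rightarrow> 'k::field) ` nontrivial_dom_basis V E s t Z)
       = fun_vs.span ((delta0_coeff VB E sB tB ZB :: _ \<Rightarrow> _ \<Rightarrow> 'k) ` nontrivial_dom_basis VB E sB tB ZB)"
proof -
  have "\<forall>p\<in>basis_paths V E s t Z. length (snd p) \<le> 1"
    using basis_path_length_rad_square_zero[OF assms] by blast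
  moreover from this have "\<forall>p\<in>basis_paths VB E sB tB ZB. length (snd p) \<le> 1"
    by (simp add: basis_paths_glued_eq)
  ultimately show ?thesis
    by (simp add: span_subset_zero delta0_coeff_nontrivial_eq_0 image_subset_iff)
qed

lemma basis_paths_glued_iff_sink:
  assumes "is_sink E s en" and "fst p \<noteq> en"
  shows "p \<in> basis_paths VB E sB tB ZB \<longleftrightarrow> p \<in> basis_paths V E s t Z"
proof
  assume "p \<in> basis_paths VB E sB tB ZB"
  then obtain q where q: "q \<in> basis_paths V E s t Z" and p: "p = (gl (fst q), snd q)"
    unfolding basis_paths_glued_eq by blast
  show "p \<in> basis_paths V E s t Z"
  proof (cases "snd q = []")
    case True
    have "fst q \<in> V"
      using q by (simp add: basis_paths_def valid_path_def)
    then have "gl (fst q) \<in> V"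
      using gl_in_VB VB_subset by blast
    then show ?thesis
      using True p by (simp add: trivial_path_in_basis_paths[OF _ Z_length])
  next
    case False
    then have "hd (snd q) \<in> E" "s (hd (snd q)) = fst q"
      using q by (auto simp: basis_paths_def valid_path_def arrow_seq_def)
    then have "gl (fst q) = fst q"
      using assms(1) by (auto simp: is_sink_def glue_v_def)
    then show ?thesis
      using p q by simp
  qed
next
  assume "p \<in> basis_paths V E s t Z"
  then show "p \<in> basis_paths VB E sB tB ZB"
    using basis_path_glues assms(2) by (fastforce simp: glue_v_def)
qed

lemma nontrivial_dom_basis_glued_source_sink:
  assumes src: "is_source E t e1" and snk: "is_sink E s en"
    and d: "d \<in> nontrivial_dom_basis V E s t Z"
  shows "d \<in> nontrivial_dom_basis VB E sB tB ZB \<and> delta0_coeff VB E sB tB ZB d = delta0_coeff V E s t Z d"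
proof -
  obtain e g where dd: "d = (e, g)"
    by (cases d)
  have g: "e \<in> V" "g \<in> basis_paths V E s t Z" "fst g = e" "pend t g = e" "snd g \<noteq> []"
    using d by (auto simp: dd nontrivial_dom_basis_def dom_basis_def)
  then have "hd (snd g) \<in> E" "last (snd g) \<in> E" "s (hd (snd g)) = e" "t (last (snd g)) = e"
    by (auto simp: basis_paths_def valid_path_def arrow_seq_def pend_def)
  then have "e \<noteq> e1" "e \<noteq> en"
    using src snk by (auto simp: is_source_def is_sink_def)
  then have gl_e: "gl v = e \<longleftrightarrow> v = e" for v
    by (rule gl_eq_iff)
  have sB_eq: "a \<in> E \<Longrightarrow> sB a = s a" for a
    using snk by (simp add: is_sink_def glue_v_def)
  have basis_iff: "fst p \<noteq> en \<Longrightarrow> p \<in> basis_paths VB E sB tB ZB \<longleftrightarrow> p \<in> basis_paths V E s t Z" for p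
    using snk by (rule basis_paths_glued_iff_sink)
  have "d \<in> nontrivial_dom_basis VB E sB tB ZB"
    using g \<open>e \<noteq> en\<close> basis_iff[of g] gl_e
    by (auto simp: dd nontrivial_dom_basis_def dom_basis_def pend_def glue_V_def)
  moreover have "delta0_coeff VB E sB tB ZB d = delta0_coeff V E s t Z d"
  proof
    fix c
    show "delta0_coeff VB E sB tB ZB d c = delta0_coeff V E s t Z d c"
      using g(3) \<open>e \<noteq> en\<close> snk basis_iff gl_e sB_eq
      by (cases c) (auto simp: dd delta0_coeff_def Let_def is_sink_def)
  qed
  ultimately show ?thesis ..
qed

lemma delta0_coeff_glued_cycle_at_e1:
  assumes src: "is_source E t e1" and snk: "is_sink E s en"
    and d: "(e1, g) \<in> nontrivial_dom_basis VB E sB tB ZB"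
  shows "delta0_coeff VB E sB tB ZB (e1, g) = 0"
proof -
  have g: "g \<in> basis_paths VB E sB tB ZB" "fst g = e1" "pend tB g = e1" "snd g \<noteq> []"
    using d by (auto simp: nontrivial_dom_basis_def dom_basis_def)
  then have "hd (snd g) \<in> E" "last (snd g) \<in> E" "gl (s (hd (snd g))) = e1" "gl (t (last (snd g))) = e1"
    by (auto simp: basis_paths_def valid_path_def arrow_seq_def pend_def)
  then have last_en: "t (last (snd g)) = en" and hd_e1: "s (hd (snd g)) = e1"
    using src snk by (auto simp: is_source_def is_sink_def glue_v_def split: if_splits)
  have no_append: "(fst g, snd g @ [a]) \<notin> basis_paths VB E sB tB ZB" if "a \<in> E" for a
  proof
    assume "(fst g, snd g @ [a]) \<in> basis_paths VB E sB tB ZB"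
    from glued_basis_path_lifts[OF this] have "arrow_seq E s t (snd g @ [a])"
      by (simp add: basis_paths_def valid_path_def)
    then have "t (last (snd g)) = s a"
      using g(4) by (rule arrow_seq_snoc_last)
    then show False
      using last_en snk that unfolding is_sink_def by metis
  qed
  have no_prepend: "(sB a, a # snd g) \<notin> basis_paths VB E sB tB ZB" if "a \<in> E" for a
  proof
    assume "(sB a, a # snd g) \<in> basis_paths VB E sB tB ZB"
    from glued_basis_path_lifts[OF this] have "arrow_seq E s t (a # snd g)"
      by (simp add: basis_paths_def valid_path_def)
    then have "t a = s (hd (snd g))"
      using g(4) by (rule arrow_seq_Cons_hd)
    then show False
      using hd_e1 src that by (simp add: is_source_def)
  qed
  show ?thesis
  proof
    fix c
    show "delta0_coeff VB E sB tB ZB (e1, g) c = 0 c"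
      using no_append no_prepend g(2) by (cases c) (auto simp: delta0_coeff_def Let_def)
  qed
qed

lemma nontrivial_dom_basis_glued_source_sink_cases:
  assumes src: "is_source E t e1" and snk: "is_sink E s en"
    and d: "d \<in> nontrivial_dom_basis VB E sB tB ZB"
  shows "d \<in> nontrivial_dom_basis V E s t Z \<or> delta0_coeff VB E sB tB ZB d = 0"
proof -
  obtain e g where dd: "d = (e, g)"
    by (cases d)
  have g: "e \<in> VB" "g \<in> basis_paths VB E sB tB ZB" "fst g = e" "pend tB g = e" "snd g \<noteq> []"
    using d by (auto simp: dd nontrivial_dom_basis_def dom_basis_def)
  have "e \<noteq> en"
    using g(1) by (simp add: glue_V_def)
  show ?thesis
  proof (cases "e = e1")
    case False
    have "gl (t (last (snd g))) = e"
      using g(4,5) by (simp add: pend_def)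
    then have "t (last (snd g)) = e"
      using False \<open>e \<noteq> en\<close> gl_eq_iff by blast
    then have "d \<in> nontrivial_dom_basis V E s t Z"
      using g basis_paths_glued_iff_sink[OF snk] \<open>e \<noteq> en\<close> VB_subset
      by (auto simp: dd nontrivial_dom_basis_def dom_basis_def pend_def)
    then show ?thesis ..
  next
    case True
    show ?thesis
      unfolding dd True by (rule disjI2, rule delta0_coeff_glued_cycle_at_e1[OF src snk d[unfolded dd True]])
  qed
qed

lemma span_nontrivial_coeffs_source_sink:
  assumes "is_source E t e1" and "is_sink E s en"
  shows "fun_vs.span ((delta0_coeff V E s t Z :: _ \<Rightarrow> _ \<Rightarrow> 'k::field) ` nontrivial_dom_basis V E s t Z)
       = fun_vs.span ((delta0_coeff VB E sB tB ZB :: _ \<Rightarrow> _ \<Rightarrow> 'k) ` nontrivial_dom_basis VB E sB tB ZB)"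
  (is "fun_vs.span ?A = fun_vs.span ?B")
proof -
  have A_sub: "?A \<subseteq> ?B"
    using nontrivial_dom_basis_glued_source_sink[OF assms] by (metis image_subsetI imageI)
  moreover have B_sub: "?B \<subseteq> insert 0 ?A"
  proof (rule image_subsetI)
    fix d
    assume "d \<in> nontrivial_dom_basis VB E sB tB ZB"
    then have "d \<in> nontrivial_dom_basis V E s t Z \<or> delta0_coeff VB E sB tB ZB d = 0"
      by (rule nontrivial_dom_basis_glued_source_sink_cases[OF assms])
    then show "(delta0_coeff VB E sB tB ZB d :: _ \<Rightarrow> 'k) \<in> insert 0 ?A"
      using nontrivial_dom_basis_glued_source_sink[OF assms] by (metis imageI insertCI)
  qed
  have "fun_vs.span ?B \<subseteq> fun_vs.span ?A"
    using fun_vs.span_mono[OF B_sub] by simp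
  with fun_vs.span_mono[OF A_sub] show ?thesis
    by (rule subset_antisym)
qed

lemma dim_im_delta0_glued:
  assumes "(is_source E t e1 \<and> is_sink E s en) \<or> rad_square_zero E s t Z"
  shows "dim_im_delta0 (K :: 'k::field itself) V E s t Z
           = dim_im_delta0 K VB E sB tB ZB + (if (e1, en) \<in> adj_rel E s t then 1 else 0)"
proof -
  have "fun_vs.span ((delta0_coeff V E s t Z :: _ \<Rightarrow> _ \<Rightarrow> 'k) ` nontrivial_dom_basis V E s t Z)
      = fun_vs.span ((delta0_coeff VB E sB tB ZB :: _ \<Rightarrow> _ \<Rightarrow> 'k) ` nontrivial_dom_basis VB E sB tB ZB)"
    using assms span_nontrivial_coeffs_source_sink span_nontrivial_coeffs_rad_square_zero by blast
  then have "fun_vs.dim ((delta0_coeff V E s t Z :: _ \<Rightarrow> _ \<Rightarrow> 'k) ` nontrivial_dom_basis V E s t Z)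
      = fun_vs.dim ((delta0_coeff VB E sB tB ZB :: _ \<Rightarrow> _ \<Rightarrow> 'k) ` nontrivial_dom_basis VB E sB tB ZB)"
    by (rule fun_vs.span_eq_dim)
  then show ?thesis
    unfolding dim_im_delta0_split[OF quiver Z_length finite_basis_paths[OF monomial]]
      dim_im_delta0_split[OF quiver_glued ZB_length finite_basis_paths_glued] dim_incidence_glued
    by simp
qed

end

theorem corollary3p10:
  fixes V :: "'v set" and E :: "'a set" and s t :: "'a \<Rightarrow> 'v" and Z :: "'a list set"
    and e1 en :: 'v and K :: "'k::field itself"
  assumes mono: "monomial_data V E s t Z"
    and e1V: "e1 \<in> V" and enV: "en \<in> V" and dist: "e1 \<noteq> en"
    and ni1: "\<not> isolated E s t e1" and nin: "\<not> isolated E s t en"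
    and cases: "(is_source E t e1 \<and> is_sink E s en) \<or> rad_square_zero E s t Z"
  defines "sB \<equiv> glue_v e1 en \<circ> s" and "tB \<equiv> glue_v e1 en \<circ> t"
    and "VB \<equiv> glue_V V e1 en" and "ZB \<equiv> glue_Z E s t Z e1 en"
  shows "int (dim_im_delta0 K V E s t Z)
           = int (dim_im_delta0 K VB E sB tB ZB) + 1
             + int (num_components VB E sB tB) - int (num_components V E s t)
         \<and> ((e1, en) \<in> adj_rel E s t \<longrightarrow>
              dim_im_delta0 K V E s t Z = dim_im_delta0 K VB E sB tB ZB + 1)
         \<and> ((e1, en) \<notin> adj_rel E s t \<longrightarrow>
              dim_im_delta0 K V E s t Z = dim_im_delta0 K VB E sB tB ZB)"
proof -
  interpret G: gluing V E s t Z e1 en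
    using mono e1V enV dist by unfold_locales
  have "dim_im_delta0 K V E s t Z
      = dim_im_delta0 K VB E sB tB ZB + (if (e1, en) \<in> adj_rel E s t then 1 else 0)"
    unfolding sB_def tB_def VB_def ZB_def using cases by (rule G.dim_im_delta0_glued)
  moreover have "num_components V E s t
      = num_components VB E sB tB + (if (e1, en) \<in> adj_rel E s t then 0 else 1)"
    unfolding sB_def tB_def VB_def by (rule G.num_components_glued)
  ultimately show ?thesis
    by (cases "(e1, en) \<in> adj_rel E s t") simp_all
qed

end
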